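(* Let $\mathcal{X}$ be a finite set, $\mathcal{Y}=\{y_0,y_1\}$, and consider domains $s\in\{1,\dots,K,\star\}$, each with a joint distribution $P^s$ over $(U,X,Y)$ ($U$ unobserved), together with a coarsening $\tilde U=\psi(U)$ taking values in a finite set $\tilde{\mathcal{U}}$ of size $r$ (with a fixed ordering), and a fixed map $\phi:\mathcal{X}\to\mathbb{R}^d$. Assume: (i) (linear abduction with shared deduction) there are matrices $A_1,\dots,A_K,A_\star,D\in\mathbb{R}^{d\times r}$ such that for every $s\in\{1,\dots,K,\star\}$ and every $x\in\mathcal{X}$, $\big(P^s(\tilde U=\tilde u\mid X=x)\big)_{\tilde u\in\tilde{\mathcal{U}}}=\mathrm{softmax}(A_s^\top\phi(x))$ and $\big(P^s(Y=y_1\mid X=x,\tilde U=\tilde u)\big)_{\tilde u\in\tilde{\mathcal{U}}}=\mathrm{sigmoid}(D^\top\phi(x))$ (sigmoid applied entrywise), so in particular the deduction vector is the same in all domains; (ii) (transplant basis) $L\in\mathbb{R}^{d\times r}$ satisfies $A_s^\top L=I_r$ for all $s\in\{1,\dots,K,\star\}$ and $D^\top L=0$; set $T_{s\to s'}:=I_d+L(A_s^\top-A_{s'}^\top)$; (iii) (closure) for all $s,s'\in\{1,\dots,K,\star\}$ and all $w\in\mathbb{R}^d$: $P^s(\phi(X)=w)>0 \iff P^{s'}(\phi(X)=T_{s\to s'}w)>0$; (iv) (distributional match) fix any $A\in\mathbb{R}^{d\times r}$ with $A^\top L=I_r$ (for instance $A=A_s$ for some $s$), write $W:=\phi(X)$,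 $W_A:=LA^\top W$, $W_D:=(I_d-LA^\top)W$ and $\pi_A:=LA^\top$; for all $s,s'\in\{1,\dots,K,\star\}$ and every $w_D$, the law of $\pi_A T_{s\to s'}(w_D+W_A)$ when $W_A\sim P^s(W_A\mid W_D=w_D)$ equals $P^{s'}(W_A\mid W_D=w_D)$. Then the deduction component $W_D=(I_d-LA^\top)\phi(X)$ is an invariant representation: $P^s(Y\mid W_D)=P^{s'}(Y\mid W_D)$ for all $s,s'\in\{1,\dots,K,\star\}$.
   Context: softmax and sigmoid have their standard meanings; the $\tilde u$-th entry of $\mathrm{softmax}(A_s^\top\phi(x))$ is the modeled probability $P^s(\tilde u\mid x)$ and the $\tilde u$-th entry of $\mathrm{sigmoid}(D^\top\phi(x))$ is the modeled $P^s(y_1\mid x,\tilde u)$. $T_{s\to s'}$ is called the transplant operator from domain $s$ to domain $s'$. *)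

theory Defs
  imports "HOL-Probability.Probability"
begin

definition softmax :: "real ^ 'r \<Rightarrow> real ^ 'r" where
  "softmax z = (\<chi> i. exp (z $ i) / (\<Sum>j\<in>UNIV. exp (z $ j)))"

definition sigmoid :: "real ^ 'r \<Rightarrow> real ^ 'r" where
  "sigmoid z = (\<chi> i. 1 / (1 + exp (- (z $ i))))"

definition cprob :: "'a measure \<Rightarrow> 'a set \<Rightarrow> 'a set \<Rightarrow> real" where
  "cprob M A B = measure M (A \<inter> B) / measure M B"

definition transplant ::
  "real ^ 'r ^ 'd \<Rightarrow> real ^ 'r ^ 'd \<Rightarrow> real ^ 'r ^ 'd \<Rightarrow> real ^ 'd ^ 'd" where
  "transplant L As As' = mat 1 + L ** (transpose As - transpose As')"

end

(* On the fibre W_D = wD every input satisfies phi x = wD + pi_A (phi x), with pi_A = L A^T.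
   Since A_s'^T L = I and D^T L = 0, the transplant T = T_{s->s'} keeps the deduction part of
   phi x, turns A_s^T (phi x) into A_s'^T (T (phi x)) and leaves D^T (phi x) unchanged. So on the
   fibre the model gives P^s(y_1 | X = x) = G (pi_A T (wD + W_A)) and P^s'(y_1 | X = x) = G W_A for
   one function G a = P^s'(y_1 | phi X = wD + a). Conditioning on W_D = wD averages these over the
   fibre, so both conditional probabilities are means of G under the two laws identified by the
   distributional match (iv). *)

theory Submission
  imports Defs
begin

lemma (in finite_measure) measure_eq_sum_fibres:
  assumes "finite T" and "\<And>t. t \<in> T \<Longrightarrow> E \<inter> {\<omega>. g \<omega> = t} \<in> sets M"
  shows "measure M (E \<inter> {\<omega>. g \<omega> \<in> T}) = (\<Sum>t\<in>T. measure M (E \<inter> {\<omega>. g \<omega> = t}))"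
proof -
  have "E \<inter> {\<omega>. g \<omega> \<in> T} = (\<Union>t\<in>T. E \<inter> {\<omega>. g \<omega> = t})" by auto
  also have "measure M \<dots> = (\<Sum>t\<in>T. measure M (E \<inter> {\<omega>. g \<omega> = t}))"
    by (rule finite_measure_finite_Union) (use assms in \<open>auto simp: disjoint_family_on_def\<close>)
  finally show ?thesis .
qed

lemma (in finite_measure) measure_Int_eq_cprob_mult:
  assumes "B \<in> sets M"
  shows "measure M (A \<inter> B) = cprob M A B * measure M B"
proof (cases "measure M B = 0")
  case True
  then have "measure M (A \<inter> B) = 0"
    using finite_measure_mono[of "A \<inter> B" B] assms by (simp add: measure_le_0_iff)
  with True show ?thesis by simp
qed (simp add: cprob_def)

lemma (in finite_measure) cprob_Compl:
  assumes "A \<in> sets M" "B \<in> sets M" "measure M B \<noteq> 0"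
  shows "cprob M (- A) B = 1 - cprob M A B"
proof -
  have "- A \<inter> B = B - A" by auto
  then show ?thesis
    using assms by (simp add: cprob_def finite_measure_Diff' Int_commute diff_divide_distrib)
qed

lemma (in finite_measure) measure_Int_eq_sum_cprob:
  fixes Z :: "'a \<Rightarrow> 'r::finite"
  assumes "E \<in> sets M" "B \<in> sets M" "\<And>u. {\<omega>. Z \<omega> = u} \<in> sets M"
  shows "measure M (E \<inter> B)
    = measure M B * (\<Sum>u\<in>UNIV. cprob M {\<omega>. Z \<omega> = u} B * cprob M E (B \<inter> {\<omega>. Z \<omega> = u}))"
proof -
  have "measure M (E \<inter> B) = measure M ((E \<inter> B) \<inter> {\<omega>. Z \<omega> \<in> UNIV})" by simp
  also have "\<dots> = (\<Sum>u\<in>UNIV. measure M (E \<inter> (B \<inter> {\<omega>. Z \<omega> = u})))"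
    using assms by (subst measure_eq_sum_fibres) (auto simp: Int_assoc)
  also have "\<dots> = (\<Sum>u\<in>UNIV. cprob M E (B \<inter> {\<omega>. Z \<omega> = u}) * (cprob M {\<omega>. Z \<omega> = u} B * measure M B))"
    using assms measure_Int_eq_cprob_mult[of "B \<inter> {\<omega>. Z \<omega> = u}" E for u]
      measure_Int_eq_cprob_mult[of B "{\<omega>. Z \<omega> = u}" for u] by (simp add: Int_commute)
  finally show ?thesis by (simp add: sum_distrib_left ac_simps)
qed

lemma (in finite_measure) cprob_eq_sum_values:
  fixes X :: "'a \<Rightarrow> 'x" and h :: "'x \<Rightarrow> real"
  assumes "finite S" "finite C" "h ` S \<subseteq> C"
    and X_meas: "\<And>T. {\<omega>. X \<omega> \<in> T} \<in> sets M" and "E \<in> sets M"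
    and cond: "\<And>x. x \<in> S \<Longrightarrow> measure M (E \<inter> {\<omega>. X \<omega> = x}) = measure M {\<omega>. X \<omega> = x} * h x"
  shows "cprob M E {\<omega>. X \<omega> \<in> S} = (\<Sum>c\<in>C. c * cprob M {\<omega>. h (X \<omega>) = c} {\<omega>. X \<omega> \<in> S})"
proof -
  have fibre: "\<And>x. {\<omega>. X \<omega> = x} \<in> sets M"
    using X_meas[of "{x}" for x] by simp
  have level: "measure M ({\<omega>. h (X \<omega>) = c} \<inter> {\<omega>. X \<omega> \<in> S})
      = (\<Sum>x\<in>{x\<in>S. h x = c}. measure M {\<omega>. X \<omega> = x})" for c
  proof -
    have "{\<omega>. h (X \<omega>) = c} \<inter> {\<omega>. X \<omega> \<in> S} = UNIV \<inter> {\<omega>. X \<omega> \<in> {x\<in>S. h x = c}}" by auto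
    then show ?thesis
      using \<open>finite S\<close> fibre measure_eq_sum_fibres[of "{x\<in>S. h x = c}" UNIV X] by simp
  qed
  have "measure M (E \<inter> {\<omega>. X \<omega> \<in> S}) = (\<Sum>x\<in>S. measure M {\<omega>. X \<omega> = x} * h x)"
    using assms fibre by (simp add: measure_eq_sum_fibres)
  also have "\<dots> = (\<Sum>c\<in>C. (\<Sum>x\<in>{x\<in>S. h x = c}. measure M {\<omega>. X \<omega> = x} * h x))"
    using assms by (subst sum.group[symmetric]) auto
  also have "\<dots> = (\<Sum>c\<in>C. c * measure M ({\<omega>. h (X \<omega>) = c} \<inter> {\<omega>. X \<omega> \<in> S}))"
    by (simp add: level sum_distrib_left mult.commute)
  finally show ?thesis
    by (simp add: cprob_def sum_divide_distrib)
qed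

lemma cprob_eq_if_conditional_laws_eq:
  fixes X :: "'a \<Rightarrow> 'x" and X' :: "'b \<Rightarrow> 'x" and h h' :: "'x \<Rightarrow> real"
  assumes "finite_measure M" "finite_measure M'" "finite S"
    and "\<And>T. {\<omega>. X \<omega> \<in> T} \<in> sets M" "\<And>T. {\<omega>. X' \<omega> \<in> T} \<in> sets M'"
    and "E \<in> sets M" "E' \<in> sets M'"
    and "\<And>x. x \<in> S \<Longrightarrow> measure M (E \<inter> {\<omega>. X \<omega> = x}) = measure M {\<omega>. X \<omega> = x} * h x"
    and "\<And>x. x \<in> S \<Longrightarrow> measure M' (E' \<inter> {\<omega>. X' \<omega> = x}) = measure M' {\<omega>. X' \<omega> = x} * h' x"
    and laws: "\<And>c. cprob M {\<omega>. h (X \<omega>) = c} {\<omega>. X \<omega> \<in> S}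
                 = cprob M' {\<omega>. h' (X' \<omega>) = c} {\<omega>. X' \<omega> \<in> S}"
  shows "cprob M E {\<omega>. X \<omega> \<in> S} = cprob M' E' {\<omega>. X' \<omega> \<in> S}"
proof -
  define C where "C = h ` S \<union> h' ` S"
  have "finite C" "h ` S \<subseteq> C" "h' ` S \<subseteq> C"
    using \<open>finite S\<close> by (auto simp: C_def)
  then show ?thesis
    using assms finite_measure.cprob_eq_sum_values[of M S C h X E]
      finite_measure.cprob_eq_sum_values[of M' S C h' X' E'] by simp
qed

lemma cprob_bool_eq_if_cprob_True_eq:
  fixes Y :: "'a \<Rightarrow> bool" and Y' :: "'b \<Rightarrow> bool"
  assumes "finite_measure M" "finite_measure M'"
    and "{\<omega>. Y \<omega>} \<in> sets M" "{\<omega>. Y' \<omega>} \<in> sets M'" "B \<in> sets M" "B' \<in> sets M'"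
    and "measure M B \<noteq> 0" "measure M' B' \<noteq> 0"
    and "cprob M {\<omega>. Y \<omega>} B = cprob M' {\<omega>. Y' \<omega>} B'"
  shows "cprob M {\<omega>. Y \<omega> = y} B = cprob M' {\<omega>. Y' \<omega> = y} B'"
proof (cases y)
  case False
  then show ?thesis
    using assms finite_measure.cprob_Compl[of M "{\<omega>. Y \<omega>}" B]
      finite_measure.cprob_Compl[of M' "{\<omega>. Y' \<omega>}" B'] by (simp add: Collect_neg_eq)
qed (use assms in simp)

lemma transplant_mult_vector:
  "transplant L As Bs *v w = w + L *v ((transpose As - transpose Bs) *v w)"
  by (simp add: transplant_def matrix_vector_mult_add_rdistrib matrix_vector_mul_assoc)

lemma deduction_part_transplant:
  fixes L A As Bs :: "real ^ 'r ^ 'd"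
  assumes "transpose A ** L = mat 1"
  shows "(mat 1 - L ** transpose A) *v (transplant L As Bs *v w) = (mat 1 - L ** transpose A) *v w"
proof -
  have "(L ** transpose A) *v (L *v v) = L *v v" for v
    by (metis assms matrix_vector_mul_assoc matrix_vector_mul_lid)
  then have "(mat 1 - L ** transpose A) *v (L *v v) = 0" for v
    by (simp add: matrix_vector_mult_diff_rdistrib)
  then show ?thesis by (simp add: transplant_mult_vector matrix_vector_right_distrib)
qed

lemma fibre_point_decomposition:
  fixes P :: "real ^ 'd ^ 'd"
  assumes "(mat 1 - P) *v w = wD"
  shows "wD + P *v w = w"
  by (simp add: matrix_vector_mult_diff_rdistrib flip: assms)

lemma transplant_on_fibre:
  fixes L A As Bs :: "real ^ 'r ^ 'd"
  assumes "transpose A ** L = mat 1" and fibre: "(mat 1 - L ** transpose A) *v w = wD"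
  shows "wD + (L ** transpose A) *v (transplant L As Bs *v (wD + (L ** transpose A) *v w))
    = transplant L As Bs *v w"
proof -
  have "(mat 1 - L ** transpose A) *v (transplant L As Bs *v w) = wD"
    using fibre by (simp add: deduction_part_transplant[OF assms(1)])
  then show ?thesis
    by (simp add: fibre_point_decomposition[OF fibre] fibre_point_decomposition)
qed

text \<open>The modelled P(Y = y_1 | X = x), as a function of w = phi x.\<close>
definition label_prob :: "real ^ 'r ^ 'd \<Rightarrow> real ^ 'r ^ 'd \<Rightarrow> real ^ 'd \<Rightarrow> real" where
  "label_prob As D w = (\<Sum>u\<in>UNIV. softmax (transpose As *v w) $ u * sigmoid (transpose D *v w) $ u)"

lemma label_prob_transplant:
  fixes L As Bs D :: "real ^ 'r ^ 'd"
  assumes "transpose Bs ** L = mat 1" "transpose D ** L = 0"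
  shows "label_prob Bs D (transplant L As Bs *v w) = label_prob As D w"
proof -
  have "transpose C *v (transplant L As Bs *v w)
      = transpose C *v w + (transpose C ** L) *v ((transpose As - transpose Bs) *v w)"
    for C :: "real ^ 'r ^ 'd"
    by (simp add: transplant_mult_vector matrix_vector_right_distrib matrix_vector_mul_assoc
        matrix_mul_assoc)
  then show ?thesis
    using assms by (simp add: label_prob_def matrix_vector_mult_diff_rdistrib)
qed

lemma measure_label_Int_input:
  fixes M :: "('u \<times> 'x \<times> bool) measure" and psi :: "'u \<Rightarrow> 'r::finite"
  assumes "finite_measure M"
    and events: "\<And>Q. {\<omega>. Q (psi (fst \<omega>)) (snd \<omega>)} \<in> sets M"
    and abduction: "measure M {\<omega>. fst (snd \<omega>) = x} > 0 \<Longrightarrow>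
        (\<chi> u. cprob M {\<omega>. psi (fst \<omega>) = u} {\<omega>. fst (snd \<omega>) = x}) = softmax (transpose As *v w)"
    and deduction: "measure M {\<omega>. fst (snd \<omega>) = x} > 0 \<Longrightarrow>
        (\<chi> u. cprob M {\<omega>. snd (snd \<omega>)} {\<omega>. fst (snd \<omega>) = x \<and> psi (fst \<omega>) = u})
          = sigmoid (transpose D *v w)"
  shows "measure M ({\<omega>. snd (snd \<omega>)} \<inter> {\<omega>. fst (snd \<omega>) = x})
    = measure M {\<omega>. fst (snd \<omega>) = x} * label_prob As D w"
proof -
  interpret finite_measure M by fact
  let ?X = "{\<omega>::'u \<times> 'x \<times> bool. fst (snd \<omega>) = x}"
  have total: "measure M ({\<omega>. snd (snd \<omega>)} \<inter> ?X) = measure M ?X *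
      (\<Sum>u\<in>UNIV. cprob M {\<omega>. psi (fst \<omega>) = u} ?X * cprob M {\<omega>. snd (snd \<omega>)} (?X \<inter> {\<omega>. psi (fst \<omega>) = u}))"
    using events[of "\<lambda>_ z. snd z"] events[of "\<lambda>_ z. fst z = x"] events[of "\<lambda>p _. p = u" for u]
    by (intro measure_Int_eq_sum_cprob) auto
  show ?thesis
  proof (cases "measure M ?X > 0")
    case True
    then show ?thesis
      using total abduction deduction by (simp add: label_prob_def vec_eq_iff Collect_conj_eq)
  next
    case False
    then have "measure M ?X = 0" using measure_nonneg[of M ?X] by linarith
    then show ?thesis using total by simp
  qed
qed

lemma space_fst_eq_UNIV_if_nonnull:
  assumes "sets M = sets (M1 \<Otimes>\<^sub>M M2)" "measure M {\<omega>. R (snd \<omega>)} \<noteq> 0"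
  shows "space M1 = UNIV"
proof -
  let ?E = "{\<omega>. R (snd \<omega>)}"
  have "?E \<in> sets M"
    by (metis assms(2) measure_notin_sets)
  from sets.sets_into_space[OF this] have sub: "?E \<subseteq> space M1 \<times> space M2"
    using sets_eq_imp_space_eq[OF assms(1)] by (simp add: space_pair_measure)
  obtain \<omega> where "\<omega> \<in> ?E"
    using assms(2) by (cases "?E = {}") auto
  then have "(u, snd \<omega>) \<in> space M1 \<times> space M2" for u
    using sub by (simp add: subset_eq)
  then show ?thesis by auto
qed

lemma coarsened_events_measurable:
  fixes psi :: "'u \<Rightarrow> 'r::countable"
  assumes "sets M = sets (MU \<Otimes>\<^sub>M
      (count_space (UNIV :: 'x::countable set) \<Otimes>\<^sub>M count_space (UNIV :: 'y::countable set)))"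
    and "psi \<in> measurable MU (count_space UNIV)" and "space MU = UNIV"
  shows "{\<omega>. Q (psi (fst \<omega>)) (snd \<omega>)} \<in> sets M"
proof -
  have product: "count_space UNIV \<Otimes>\<^sub>M (count_space UNIV \<Otimes>\<^sub>M count_space UNIV)
      = count_space (UNIV :: ('r \<times> 'x \<times> 'y) set)"
    by (simp add: pair_measure_countable)
  have "(\<lambda>\<omega>. (psi (fst \<omega>), snd \<omega>)) \<in> measurable
      (MU \<Otimes>\<^sub>M (count_space (UNIV :: 'x set) \<Otimes>\<^sub>M count_space (UNIV :: 'y set)))
      (count_space UNIV \<Otimes>\<^sub>M (count_space UNIV \<Otimes>\<^sub>M count_space UNIV))"
    using assms(2) by measurable
  then have "(\<lambda>\<omega>. (psi (fst \<omega>), snd \<omega>)) \<in> measurable M (count_space UNIV)"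
    unfolding product by (simp add: measurable_cong_sets[OF assms(1) refl])
  then have "(\<lambda>\<omega>. (psi (fst \<omega>), snd \<omega>)) -` {z. Q (fst z) (snd z)} \<inter> space M \<in> sets M"
    by (rule measurable_sets) simp
  moreover have "space M = UNIV"
    using sets_eq_imp_space_eq[OF assms(1)] assms(3) by (simp add: space_pair_measure)
  ultimately show ?thesis by simp
qed

theorem corollary2p2:
  fixes P :: "'k::finite \<Rightarrow> ('u \<times> 'x::finite \<times> bool) measure"
    and MU :: "'u measure"
    and psi :: "'u \<Rightarrow> 'r::finite"
    and phi :: "'x \<Rightarrow> real ^ 'd::finite"
    and As :: "'k \<Rightarrow> real ^ 'r ^ 'd"
    and D L A :: "real ^ 'r ^ 'd"
  assumes prob: "\<And>s. prob_space (P s)"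
    and sets_P: "\<And>s. sets (P s) = sets (MU \<Otimes>\<^sub>M (count_space UNIV \<Otimes>\<^sub>M count_space UNIV))"
    and psi_meas: "psi \<in> measurable MU (count_space UNIV)"
    and abduction: "\<And>s x. measure (P s) {\<omega>. fst (snd \<omega>) = x} > 0 \<Longrightarrow>
        (\<chi> u. cprob (P s) {\<omega>. psi (fst \<omega>) = u} {\<omega>. fst (snd \<omega>) = x})
          = softmax (transpose (As s) *v phi x)"
    and deduction: "\<And>s x. measure (P s) {\<omega>. fst (snd \<omega>) = x} > 0 \<Longrightarrow>
        (\<chi> u. cprob (P s) {\<omega>. snd (snd \<omega>)} {\<omega>. fst (snd \<omega>) = x \<and> psi (fst \<omega>) = u})
          = sigmoid (transpose D *v phi x)"
    and basis_A: "\<And>s. transpose (As s) ** L = mat 1"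
    and basis_D: "transpose D ** L = 0"
    and closure: "\<And>s s' w. measure (P s) {\<omega>. phi (fst (snd \<omega>)) = w} > 0 \<longleftrightarrow>
        measure (P s') {\<omega>. phi (fst (snd \<omega>)) = transplant L (As s) (As s') *v w} > 0"
    and A_basis: "transpose A ** L = mat 1"
    and match: "\<And>s s' wD V.
        measure (P s) {\<omega>. (mat 1 - L ** transpose A) *v phi (fst (snd \<omega>)) = wD} > 0 \<Longrightarrow>
        measure (P s') {\<omega>. (mat 1 - L ** transpose A) *v phi (fst (snd \<omega>)) = wD} > 0 \<Longrightarrow>
        cprob (P s)
          {\<omega>. (L ** transpose A) *v (transplant L (As s) (As s') *v
                 (wD + (L ** transpose A) *v phi (fst (snd \<omega>)))) \<in> V}
          {\<omega>. (mat 1 - L ** transpose A) *v phi (fst (snd \<omega>)) = wD}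
        = cprob (P s')
          {\<omega>. (L ** transpose A) *v phi (fst (snd \<omega>)) \<in> V}
          {\<omega>. (mat 1 - L ** transpose A) *v phi (fst (snd \<omega>)) = wD}"
  shows "\<And>s s' wD y.
        measure (P s) {\<omega>. (mat 1 - L ** transpose A) *v phi (fst (snd \<omega>)) = wD} > 0 \<Longrightarrow>
        measure (P s') {\<omega>. (mat 1 - L ** transpose A) *v phi (fst (snd \<omega>)) = wD} > 0 \<Longrightarrow>
        cprob (P s) {\<omega>. snd (snd \<omega>) = y}
          {\<omega>. (mat 1 - L ** transpose A) *v phi (fst (snd \<omega>)) = wD}
        = cprob (P s') {\<omega>. snd (snd \<omega>) = y}
          {\<omega>. (mat 1 - L ** transpose A) *v phi (fst (snd \<omega>)) = wD}"
proof -
  fix s s' wD y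
  let ?W\<^sub>D = "\<lambda>x. (mat 1 - L ** transpose A) *v phi x"
  let ?B = "{\<omega>::'u \<times> 'x \<times> bool. ?W\<^sub>D (fst (snd \<omega>)) = wD}"
  assume pos: "measure (P s) ?B > 0" and pos': "measure (P s') ?B > 0"
  define G where "G a = label_prob (As s') D (wD + a)" for a
  have fm: "finite_measure (P t)" for t
    by (rule prob_space.finite_measure[OF prob])
  \<comment> \<open>The events of the statement are not intersected with the sample space, so their
    measurability needs space MU = UNIV, which the non-null fibre forces.\<close>
  have "space MU = UNIV"
    using pos space_fst_eq_UNIV_if_nonnull[OF sets_P, of s "\<lambda>z. ?W\<^sub>D (fst z) = wD"] by simp
  then have events: "{\<omega>. Q (psi (fst \<omega>)) (snd \<omega>)} \<in> sets (P t)" for t Q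
    by (rule coarsened_events_measurable[OF sets_P psi_meas])
  have input_events: "{\<omega>. fst (snd \<omega>) \<in> V} \<in> sets (P t)" for t V
    using events[of "\<lambda>_ z. fst z \<in> V" t] by simp
  have label_event: "{\<omega>. snd (snd \<omega>)} \<in> sets (P t)" for t
    using events[of "\<lambda>_ z. snd z" t] by simp
  have label_s: "measure (P s) ({\<omega>. snd (snd \<omega>)} \<inter> {\<omega>. fst (snd \<omega>) = x})
      = measure (P s) {\<omega>. fst (snd \<omega>) = x}
        * G ((L ** transpose A) *v (transplant L (As s) (As s') *v (wD + (L ** transpose A) *v phi x)))"
    if "x \<in> {x. ?W\<^sub>D x = wD}" for x
    using that measure_label_Int_input[OF fm events abduction deduction, of s x]
    by (simp add: G_def transplant_on_fibre[OF A_basis] label_prob_transplant[OF basis_A basis_D])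
  have label_s': "measure (P s') ({\<omega>. snd (snd \<omega>)} \<inter> {\<omega>. fst (snd \<omega>) = x})
      = measure (P s') {\<omega>. fst (snd \<omega>) = x} * G ((L ** transpose A) *v phi x)"
    if "x \<in> {x. ?W\<^sub>D x = wD}" for x
    using that measure_label_Int_input[OF fm events abduction deduction, of s' x]
    by (simp add: G_def fibre_point_decomposition)
  have "cprob (P s) {\<omega>. snd (snd \<omega>)} ?B = cprob (P s') {\<omega>. snd (snd \<omega>)} ?B"
    using cprob_eq_if_conditional_laws_eq[where S = "{x. ?W\<^sub>D x = wD}",
        OF fm fm _ input_events input_events label_event label_event label_s label_s']
      match[OF pos pos', of "G -` {c}" for c]
    by simp
  then show "cprob (P s) {\<omega>. snd (snd \<omega>) = y} ?B = cprob (P s') {\<omega>. snd (snd \<omega>) = y} ?B"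
    using pos pos' input_events[of "{x. ?W\<^sub>D x = wD}"]
    by (intro cprob_bool_eq_if_cprob_True_eq[OF fm fm label_event label_event]) simp_all
qed

end
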